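(* Let $q:V\to\overline K/\overline R$ be a non-trivial generalized $(\sigma,\varepsilon)$-quadratic form with sesquilinearization $f$, and let $E=(e_i)_{i\in I}$ and $E'=(e'_i)_{i\in I}$ be two bases of $V$ consisting of $q$-singular vectors, indexed by the same totally ordered set $I$. Let $\overline R_{E,E'}$ be the smallest closed subgroup of $\overline K$ containing $\{\overline{g_{E'}(e_i,e_i)}\}_{i\in I}$ and define $\delta_{E,E'}:V\to\overline K$ by $\delta_{E,E'}(x)=\overline{g_E(x,x)}-\overline{g_{E'}(x,x)}$. Then $\overline R_{E,E'}$ is a vector subspace of $(\overline R,\circ)$, $\delta_{E,E'}$ is a surjective $K$-linear map from $V$ onto $\overline R_{E,E'}$ (indeed $\delta_{E,E'}(\sum_i e_i\lambda_i)=-\sum_i\overline{g_{E'}(e_i,e_i)}\circ\lambda_i$), $\delta_{E',E}=-\delta_{E,E'}$ and $\overline R_{E,E'}=\overline R_{E',E}$.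
   Context: $K$ division ring, $(\sigma,\varepsilon)$ admissible pair ($\sigma$ anti-automorphism, $\varepsilon^\sigma\varepsilon=1$, $t^{\sigma^2}=\varepsilon t\varepsilon^{-1}$). $K_{\sigma,\varepsilon}=\{t-t^\sigma\varepsilon\}$, $K^{\sigma,\varepsilon}=\{t:t=-t^\sigma\varepsilon\}$, $\overline K=K/K_{\sigma,\varepsilon}$, $\bar t$ class of $t$, $\bar t\circ\lambda=\overline{\lambda^\sigma t\lambda}$; $K^{\sigma,\varepsilon}/K_{\sigma,\varepsilon}$ is a right $K$-vector space under $\circ$. Closed subgroup: stable under all $\circ\lambda$. Generalized $(\sigma,\varepsilon)$-quadratic form with co-defect closed $\overline R$: $q:V\to\overline K/\overline R$ ($V$ right $K$-vector space) with $q(x\lambda)=q(x)\circ\lambda$ (where $(\bar t+\overline R)\circ\lambda=\bar t\circ\lambda+\overline R$) and trace-valued $(\sigma,\varepsilon)$-sesquilinear $f$ ($f(x\lambda,y\mu)=\lambda^\sigma f(x,y)\mu$, $f(y,x)=f(x,y)^\sigma\varepsilon$, $f(x,x)\in\{t+t^\sigma\varepsilon\}$) with $q(x+y)=q(x)+q(y)+(\overline{f(x,y)}+\overline R)$. For non-trivial $q$, $\overline R$ is a $K$-subspace of $K^{\sigma,\varepsilon}/K_{\sigma,\varepsilon}$. $x$ is $q$-singular if $q(x)=\overline R$. For a basis $E=(e_i)_{i\in I}$ of $q$-singular vectors with $I$ totally ordered, $g_E(\sum_i e_i\lambda_i,\sum_j e_j\mu_j)=\sum_{i<j}\lambda_i^\sigma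 f(e_i,e_j)\mu_j$; it satisfies $q(x)=\overline{g_E(x,x)}+\overline R$. *)

theory Defs
  imports Main
begin

definition admissible_pair :: "('k::division_ring \<Rightarrow> 'k) \<Rightarrow> 'k \<Rightarrow> bool" where
  "admissible_pair \<sigma> \<epsilon> \<longleftrightarrow>
     bij \<sigma> \<and> (\<forall>a b. \<sigma> (a + b) = \<sigma> a + \<sigma> b) \<and> (\<forall>a b. \<sigma> (a * b) = \<sigma> b * \<sigma> a) \<and>
     \<sigma> \<epsilon> * \<epsilon> = 1 \<and> (\<forall>t. \<sigma> (\<sigma> t) = \<epsilon> * t * inverse \<epsilon>)"

definition Kse :: "('k::division_ring \<Rightarrow> 'k) \<Rightarrow> 'k \<Rightarrow> 'k set" where
  "Kse \<sigma> \<epsilon> = {t - \<sigma> t * \<epsilon> | t. True}"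

definition Ksym :: "('k::division_ring \<Rightarrow> 'k) \<Rightarrow> 'k \<Rightarrow> 'k set" where
  "Ksym \<sigma> \<epsilon> = {t. t = - (\<sigma> t * \<epsilon>)}"

definition Ktr :: "('k::division_ring \<Rightarrow> 'k) \<Rightarrow> 'k \<Rightarrow> 'k set" where
  "Ktr \<sigma> \<epsilon> = {t + \<sigma> t * \<epsilon> | t. True}"

text \<open>The operation circ on representatives: class(t) circ lambda = class(sigma(lambda) t lambda).\<close>
definition circ :: "('k::division_ring \<Rightarrow> 'k) \<Rightarrow> 'k \<Rightarrow> 'k \<Rightarrow> 'k" where
  "circ \<sigma> t l = \<sigma> l * t * l"

text \<open>Subgroups of Kbar = K / K_{sigma,epsilon} are represented by their preimages in K,
  i.e. additive subgroups of K containing K_{sigma,epsilon}.\<close>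
definition closed_subgroup :: "('k::division_ring \<Rightarrow> 'k) \<Rightarrow> 'k \<Rightarrow> 'k set \<Rightarrow> bool" where
  "closed_subgroup \<sigma> \<epsilon> S \<longleftrightarrow>
     Kse \<sigma> \<epsilon> \<subseteq> S \<and> (\<forall>a\<in>S. \<forall>b\<in>S. a - b \<in> S) \<and> (\<forall>t\<in>S. \<forall>l. circ \<sigma> t l \<in> S)"

definition closed_hull :: "('k::division_ring \<Rightarrow> 'k) \<Rightarrow> 'k \<Rightarrow> 'k set \<Rightarrow> 'k set" where
  "closed_hull \<sigma> \<epsilon> A = \<Inter> {S. closed_subgroup \<sigma> \<epsilon> S \<and> A \<subseteq> S}"

text \<open>S (preimage) is a vector subspace of (Rbar, circ): a closed subgroup of Kbar
  contained in Rbar, where Rbar is contained in K^{sigma,epsilon}/K_{sigma,epsilon}.\<close>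
definition rsubspace :: "('k::division_ring \<Rightarrow> 'k) \<Rightarrow> 'k \<Rightarrow> 'k set \<Rightarrow> 'k set \<Rightarrow> bool" where
  "rsubspace \<sigma> \<epsilon> R S \<longleftrightarrow> closed_subgroup \<sigma> \<epsilon> S \<and> S \<subseteq> R \<and> S \<subseteq> Ksym \<sigma> \<epsilon>"

definition right_vector_space :: "('v::ab_group_add \<Rightarrow> 'k::division_ring \<Rightarrow> 'v) \<Rightarrow> bool" where
  "right_vector_space smult \<longleftrightarrow>
     (\<forall>x l m. smult x (l + m) = smult x l + smult x m) \<and>
     (\<forall>x y l. smult (x + y) l = smult x l + smult y l) \<and>
     (\<forall>x l m. smult x (l * m) = smult (smult x l) m) \<and>
     (\<forall>x. smult x 1 = x)"

definition finsupp :: "('i \<Rightarrow> 'k::zero) \<Rightarrow> bool" where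
  "finsupp c \<longleftrightarrow> finite {i. c i \<noteq> 0}"

definition lincomb :: "('v::ab_group_add \<Rightarrow> 'k::division_ring \<Rightarrow> 'v) \<Rightarrow> ('i \<Rightarrow> 'v) \<Rightarrow> ('i \<Rightarrow> 'k) \<Rightarrow> 'v" where
  "lincomb smult e c = (\<Sum>i\<in>{i. c i \<noteq> 0}. smult (e i) (c i))"

definition is_basis :: "('v::ab_group_add \<Rightarrow> 'k::division_ring \<Rightarrow> 'v) \<Rightarrow> ('i \<Rightarrow> 'v) \<Rightarrow> bool" where
  "is_basis smult e \<longleftrightarrow> (\<forall>x. \<exists>!c. finsupp c \<and> x = lincomb smult e c)"

definition coords :: "('v::ab_group_add \<Rightarrow> 'k::division_ring \<Rightarrow> 'v) \<Rightarrow> ('i \<Rightarrow> 'v) \<Rightarrow> 'v \<Rightarrow> ('i \<Rightarrow> 'k)" where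
  "coords smult e x = (THE c. finsupp c \<and> x = lincomb smult e c)"

definition trace_valued_sesq ::
  "('k::division_ring \<Rightarrow> 'k) \<Rightarrow> 'k \<Rightarrow> ('v::ab_group_add \<Rightarrow> 'k \<Rightarrow> 'v) \<Rightarrow> ('v \<Rightarrow> 'v \<Rightarrow> 'k) \<Rightarrow> bool" where
  "trace_valued_sesq \<sigma> \<epsilon> smult f \<longleftrightarrow>
     (\<forall>x y z. f (x + y) z = f x z + f y z) \<and>
     (\<forall>x y z. f x (y + z) = f x y + f x z) \<and>
     (\<forall>x y l m. f (smult x l) (smult y m) = \<sigma> l * f x y * m) \<and>
     (\<forall>x y. f y x = \<sigma> (f x y) * \<epsilon>) \<and>
     (\<forall>x. f x x \<in> Ktr \<sigma> \<epsilon>)"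

text \<open>A generalized (sigma,epsilon)-quadratic form q : V -> Kbar/Rbar with co-defect Rbar
  (given by its preimage R in K) and sesquilinearization f. The value q x is given
  by a representative in K; values are compared modulo R.\<close>
definition gen_quad_form ::
  "('k::division_ring \<Rightarrow> 'k) \<Rightarrow> 'k \<Rightarrow> ('v::ab_group_add \<Rightarrow> 'k \<Rightarrow> 'v) \<Rightarrow> 'k set \<Rightarrow>
   ('v \<Rightarrow> 'k) \<Rightarrow> ('v \<Rightarrow> 'v \<Rightarrow> 'k) \<Rightarrow> bool" where
  "gen_quad_form \<sigma> \<epsilon> smult R q f \<longleftrightarrow>
     closed_subgroup \<sigma> \<epsilon> R \<and> trace_valued_sesq \<sigma> \<epsilon> smult f \<and>
     (\<forall>x l. q (smult x l) - circ \<sigma> (q x) l \<in> R) \<and>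
     (\<forall>x y. q (x + y) - (q x + q y + f x y) \<in> R)"

definition nontrivial_gqf :: "'k set \<Rightarrow> ('v \<Rightarrow> 'k) \<Rightarrow> bool" where
  "nontrivial_gqf R q \<longleftrightarrow> (\<exists>x. q x \<notin> R)"

definition q_singular :: "'k set \<Rightarrow> ('v \<Rightarrow> 'k) \<Rightarrow> 'v \<Rightarrow> bool" where
  "q_singular R q x \<longleftrightarrow> q x \<in> R"

definition gE ::
  "('k::division_ring \<Rightarrow> 'k) \<Rightarrow> ('v::ab_group_add \<Rightarrow> 'k \<Rightarrow> 'v) \<Rightarrow> ('v \<Rightarrow> 'v \<Rightarrow> 'k) \<Rightarrow>
   ('i::linorder \<Rightarrow> 'v) \<Rightarrow> 'v \<Rightarrow> 'v \<Rightarrow> 'k" where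
  "gE \<sigma> smult f e x y =
     (let a = coords smult e x; b = coords smult e y in
      \<Sum>(i, j)\<in>{(i, j). a i \<noteq> 0 \<and> b j \<noteq> 0 \<and> i < j}. \<sigma> (a i) * f (e i) (e j) * b j)"

definition deltaEE ::
  "('k::division_ring \<Rightarrow> 'k) \<Rightarrow> ('v::ab_group_add \<Rightarrow> 'k \<Rightarrow> 'v) \<Rightarrow> ('v \<Rightarrow> 'v \<Rightarrow> 'k) \<Rightarrow>
   ('i::linorder \<Rightarrow> 'v) \<Rightarrow> ('i \<Rightarrow> 'v) \<Rightarrow> 'v \<Rightarrow> 'k" where
  "deltaEE \<sigma> smult f e e' x = gE \<sigma> smult f e x x - gE \<sigma> smult f e' x x"

definition REE ::
  "('k::division_ring \<Rightarrow> 'k) \<Rightarrow> 'k \<Rightarrow> ('v::ab_group_add \<Rightarrow> 'k \<Rightarrow> 'v) \<Rightarrow> ('v \<Rightarrow> 'v \<Rightarrow> 'k) \<Rightarrow>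
   ('i::linorder \<Rightarrow> 'v) \<Rightarrow> ('i \<Rightarrow> 'v) \<Rightarrow> 'k set" where
  "REE \<sigma> \<epsilon> smult f e e' = closed_hull \<sigma> \<epsilon> (range (\<lambda>i. gE \<sigma> smult f e' (e i) (e i)))"

end

theory Submission
  imports Defs
begin

text \<open>Since q is non-trivial, its co-defect lies in the symmetric part and f vanishes on every
  q-singular vector. On a basis E of singular vectors this gives two facts: q(x) is represented
  by g_E(x,x), and g_E(x,y) + g_E(y,x)^\<sigma> \<epsilon> = f(x,y). Hence \<delta>_{E,E'} is exactly
  \<circ>-homogeneous, and its additivity defect is u - u^\<sigma> \<epsilon> with u = g_E(y,x) - g_{E'}(y,x),
  an element of K_{\<sigma>,\<epsilon>}. As g_E(e_i,e_i) = 0, \<delta>_{E,E'}(e_i) = -g_{E'}(e_i,e_i), so \<delta>_{E,E'} is a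
  linear map onto the closed subgroup generated by the g_{E'}(e_i,e_i), each of which represents
  q(e_i) \<in> R. Swapping E and E' negates \<delta>, which identifies R_{E,E'} with R_{E',E}.\<close>

lemma closed_subgroup_diff: "closed_subgroup \<sigma> \<epsilon> S \<Longrightarrow> a \<in> S \<Longrightarrow> b \<in> S \<Longrightarrow> a - b \<in> S"
  unfolding closed_subgroup_def by blast

lemma closed_subgroup_zero:
  assumes "closed_subgroup \<sigma> \<epsilon> S"
  shows "0 \<in> S"
proof -
  have "0 - \<sigma> 0 * \<epsilon> \<in> S" using assms unfolding closed_subgroup_def Kse_def by blast
  from closed_subgroup_diff[OF assms this this] show ?thesis by simp
qed

lemma closed_subgroup_uminus: "closed_subgroup \<sigma> \<epsilon> S \<Longrightarrow> a \<in> S \<Longrightarrow> - a \<in> S"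
  by (metis closed_subgroup_diff closed_subgroup_zero diff_0)

lemma closed_subgroup_add: "closed_subgroup \<sigma> \<epsilon> S \<Longrightarrow> a \<in> S \<Longrightarrow> b \<in> S \<Longrightarrow> a + b \<in> S"
  using closed_subgroup_diff[of \<sigma> \<epsilon> S a "- b"] closed_subgroup_uminus by fastforce

lemma closed_subgroup_sum:
  "closed_subgroup \<sigma> \<epsilon> S \<Longrightarrow> (\<And>x. x \<in> A \<Longrightarrow> g x \<in> S) \<Longrightarrow> sum g A \<in> S"
  by (induction A rule: infinite_finite_induct) (auto simp: closed_subgroup_zero closed_subgroup_add)

lemma closed_subgroup_circ: "closed_subgroup \<sigma> \<epsilon> S \<Longrightarrow> a \<in> S \<Longrightarrow> circ \<sigma> a l \<in> S"
  unfolding closed_subgroup_def by blast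

lemma Kse_subset_closed_subgroup: "closed_subgroup \<sigma> \<epsilon> S \<Longrightarrow> a \<in> Kse \<sigma> \<epsilon> \<Longrightarrow> a \<in> S"
  unfolding closed_subgroup_def by blast

lemma closed_subgroup_closed_hull: "closed_subgroup \<sigma> \<epsilon> (closed_hull \<sigma> \<epsilon> A)"
  unfolding closed_hull_def closed_subgroup_def by blast

lemma closed_hull_superset: "A \<subseteq> closed_hull \<sigma> \<epsilon> A"
  unfolding closed_hull_def by blast

lemma closed_hull_minimal: "closed_subgroup \<sigma> \<epsilon> S \<Longrightarrow> A \<subseteq> S \<Longrightarrow> closed_hull \<sigma> \<epsilon> A \<subseteq> S"
  unfolding closed_hull_def by blast

lemma circ_diff: "circ \<sigma> (a - b) l = circ \<sigma> a l - circ \<sigma> b l"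
  unfolding circ_def by (simp add: algebra_simps)

lemma circ_uminus: "circ \<sigma> (- a) l = - circ \<sigma> a l"
  unfolding circ_def by simp

locale admissible =
  fixes \<sigma> :: "'k::division_ring \<Rightarrow> 'k" and \<epsilon> :: 'k
  assumes admissible: "admissible_pair \<sigma> \<epsilon>"
begin

lemma sigma_add: "\<sigma> (a + b) = \<sigma> a + \<sigma> b"
  using admissible unfolding admissible_pair_def by blast

lemma sigma_mult: "\<sigma> (a * b) = \<sigma> b * \<sigma> a"
  using admissible unfolding admissible_pair_def by blast

lemma sigma_sigma_mult_eps: "\<sigma> (\<sigma> t) * \<epsilon> = \<epsilon> * t"
proof -
  have "\<sigma> \<epsilon> * \<epsilon> = 1" and "\<sigma> (\<sigma> t) = \<epsilon> * t * inverse \<epsilon>"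
    using admissible unfolding admissible_pair_def by blast+
  then show ?thesis by (auto simp: mult.assoc)
qed

lemma sigma_zero [simp]: "\<sigma> 0 = 0"
  using sigma_add[of 0 0] by simp

lemma sigma_uminus: "\<sigma> (- a) = - \<sigma> a"
  using sigma_add[of a "- a"] by (simp add: eq_neg_iff_add_eq_0 add.commute)

lemma sigma_diff: "\<sigma> (a - b) = \<sigma> a - \<sigma> b"
  using sigma_add[of a "- b"] by (simp add: sigma_uminus)

lemma sigma_one [simp]: "\<sigma> 1 = 1"
proof -
  obtain a where "\<sigma> a = 1"
    using admissible unfolding admissible_pair_def by (metis bij_pointE)
  then show ?thesis using sigma_mult[of a 1] by simp
qed

lemma sigma_sum: "\<sigma> (sum g A) = (\<Sum>x\<in>A. \<sigma> (g x))"
  by (induction A rule: infinite_finite_induct) (auto simp: sigma_add)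

lemma sigma_sandwich_mult_eps: "\<sigma> (\<sigma> b * t * a) * \<epsilon> = \<sigma> a * (\<sigma> t * \<epsilon>) * b"
  by (simp add: sigma_mult mult.assoc sigma_sigma_mult_eps)

lemma Kse_member: "t - \<sigma> t * \<epsilon> \<in> Kse \<sigma> \<epsilon>"
  unfolding Kse_def by blast

lemma closed_subgroup_Kse: "closed_subgroup \<sigma> \<epsilon> (Kse \<sigma> \<epsilon>)"
  unfolding closed_subgroup_def
proof (intro conjI ballI allI subset_refl)
  fix a b assume "a \<in> Kse \<sigma> \<epsilon>" "b \<in> Kse \<sigma> \<epsilon>"
  then obtain s t where "a = s - \<sigma> s * \<epsilon>" "b = t - \<sigma> t * \<epsilon>"
    unfolding Kse_def by blast
  then have "a - b = (s - t) - \<sigma> (s - t) * \<epsilon>"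
    by (simp add: sigma_diff algebra_simps)
  then show "a - b \<in> Kse \<sigma> \<epsilon>" by (simp add: Kse_member)
next
  fix a l assume "a \<in> Kse \<sigma> \<epsilon>"
  then obtain t where a: "a = t - \<sigma> t * \<epsilon>" unfolding Kse_def by blast
  have "circ \<sigma> a l = \<sigma> l * t * l - \<sigma> (\<sigma> l * t * l) * \<epsilon>"
    unfolding a circ_def sigma_sandwich_mult_eps by (simp add: algebra_simps)
  then show "circ \<sigma> a l \<in> Kse \<sigma> \<epsilon>" by (simp add: Kse_member)
qed

lemma closed_subgroup_image_mod_Kse:
  fixes d :: "'a::ab_group_add \<Rightarrow> 'k" and act :: "'a \<Rightarrow> 'k \<Rightarrow> 'a"
  assumes add: "\<And>x y. d (x + y) - (d x + d y) \<in> Kse \<sigma> \<epsilon>"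
    and act: "\<And>x l. d (act x l) - circ \<sigma> (d x) l \<in> Kse \<sigma> \<epsilon>"
  shows "closed_subgroup \<sigma> \<epsilon> {t. \<exists>x. d x - t \<in> Kse \<sigma> \<epsilon>}"
  unfolding closed_subgroup_def
proof (intro conjI ballI allI subsetI)
  fix t assume t: "t \<in> Kse \<sigma> \<epsilon>"
  have "d 0 - t = - (d (0 + 0) - (d 0 + d 0)) - t" by simp
  also have "\<dots> \<in> Kse \<sigma> \<epsilon>"
    by (rule closed_subgroup_diff[OF closed_subgroup_Kse closed_subgroup_uminus[OF closed_subgroup_Kse add] t])
  finally show "t \<in> {t. \<exists>x. d x - t \<in> Kse \<sigma> \<epsilon>}" by blast
next
  fix a b assume "a \<in> {t. \<exists>x. d x - t \<in> Kse \<sigma> \<epsilon>}" "b \<in> {t. \<exists>x. d x - t \<in> Kse \<sigma> \<epsilon>}"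
  then obtain x y where x: "d x - a \<in> Kse \<sigma> \<epsilon>" and y: "d y - b \<in> Kse \<sigma> \<epsilon>" by blast
  have "d (x - y) - (a - b) = (d x - a) - (d y - b) - (d ((x - y) + y) - (d (x - y) + d y))"
    by (simp add: algebra_simps)
  also have "\<dots> \<in> Kse \<sigma> \<epsilon>"
    by (rule closed_subgroup_diff[OF closed_subgroup_Kse closed_subgroup_diff[OF closed_subgroup_Kse x y] add])
  finally show "a - b \<in> {t. \<exists>x. d x - t \<in> Kse \<sigma> \<epsilon>}" by blast
next
  fix a l assume "a \<in> {t. \<exists>x. d x - t \<in> Kse \<sigma> \<epsilon>}"
  then obtain x where x: "d x - a \<in> Kse \<sigma> \<epsilon>" by blast
  have "d (act x l) - circ \<sigma> a l = (d (act x l) - circ \<sigma> (d x) l) + circ \<sigma> (d x - a) l"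
    by (simp add: circ_diff)
  also have "\<dots> \<in> Kse \<sigma> \<epsilon>"
    by (rule closed_subgroup_add[OF closed_subgroup_Kse act closed_subgroup_circ[OF closed_subgroup_Kse x]])
  finally show "circ \<sigma> a l \<in> {t. \<exists>x. d x - t \<in> Kse \<sigma> \<epsilon>}" by blast
qed

end

abbreviation supp :: "('i \<Rightarrow> 'k::zero) \<Rightarrow> 'i set" where
  "supp c \<equiv> {i. c i \<noteq> 0}"

locale right_vs =
  fixes smult :: "'v::ab_group_add \<Rightarrow> 'k::division_ring \<Rightarrow> 'v"
  assumes right_vs: "right_vector_space smult"
begin

lemma smult_add_right: "smult x (l + m) = smult x l + smult x m"
  using right_vs unfolding right_vector_space_def by blast

lemma smult_add_left: "smult (x + y) l = smult x l + smult y l"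
  using right_vs unfolding right_vector_space_def by blast

lemma smult_mult: "smult x (l * m) = smult (smult x l) m"
  using right_vs unfolding right_vector_space_def by blast

lemma smult_one [simp]: "smult x 1 = x"
  using right_vs unfolding right_vector_space_def by blast

lemma smult_zero_right [simp]: "smult x 0 = 0"
  using smult_add_right[of x 0 0] by simp

lemma smult_zero_left [simp]: "smult 0 l = 0"
  using smult_add_left[of 0 0 l] by simp

lemma smult_sum_left: "smult (sum g A) l = (\<Sum>x\<in>A. smult (g x) l)"
  by (induction A rule: infinite_finite_induct) (auto simp: smult_add_left)

lemma lincomb_eq_sum:
  "finite S \<Longrightarrow> supp c \<subseteq> S \<Longrightarrow> lincomb smult e c = (\<Sum>i\<in>S. smult (e i) (c i))"
  unfolding lincomb_def by (rule sum.mono_neutral_left) auto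

lemma coords_lincomb: "is_basis smult e \<Longrightarrow> finsupp c \<Longrightarrow> coords smult e (lincomb smult e c) = c"
  unfolding coords_def is_basis_def by (rule the1_equality) auto

lemma finsupp_coords_and_lincomb_coords:
  "is_basis smult e \<Longrightarrow> finsupp (coords smult e x) \<and> x = lincomb smult e (coords smult e x)"
  unfolding coords_def is_basis_def using theI'[of "\<lambda>c. finsupp c \<and> x = lincomb smult e c"] by blast

lemma finite_supp_coords: "is_basis smult e \<Longrightarrow> finite (supp (coords smult e x))"
  using finsupp_coords_and_lincomb_coords unfolding finsupp_def by blast

lemma lincomb_coords: "is_basis smult e \<Longrightarrow> lincomb smult e (coords smult e x) = x"
  using finsupp_coords_and_lincomb_coords by metis

lemma sum_coords:
  "is_basis smult e \<Longrightarrow> finite S \<Longrightarrow> supp (coords smult e x) \<subseteq> S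
    \<Longrightarrow> (\<Sum>i\<in>S. smult (e i) (coords smult e x i)) = x"
  using lincomb_eq_sum lincomb_coords by metis

lemma coords_add:
  assumes e: "is_basis smult e"
  shows "coords smult e (x + y) = (\<lambda>i. coords smult e x i + coords smult e y i)"
proof -
  let ?a = "coords smult e x" and ?b = "coords smult e y"
  let ?S = "supp ?a \<union> supp ?b"
  have S: "finite ?S" using finite_supp_coords[OF e] by blast
  have "finsupp (\<lambda>i. ?a i + ?b i)"
    unfolding finsupp_def by (rule finite_subset[OF _ S]) auto
  moreover have "lincomb smult e (\<lambda>i. ?a i + ?b i) = (\<Sum>i\<in>?S. smult (e i) (?a i + ?b i))"
    by (rule lincomb_eq_sum[OF S]) auto
  moreover have "\<dots> = x + y"
    using sum_coords[OF e S, of x] sum_coords[OF e S, of y] by (simp add: smult_add_right sum.distrib)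
  ultimately show ?thesis using coords_lincomb[OF e] by metis
qed

lemma coords_smult:
  assumes e: "is_basis smult e"
  shows "coords smult e (smult x l) = (\<lambda>i. coords smult e x i * l)"
proof -
  let ?a = "coords smult e x"
  have S: "finite (supp ?a)" using finite_supp_coords[OF e] .
  have "finsupp (\<lambda>i. ?a i * l)"
    unfolding finsupp_def by (rule finite_subset[OF _ S]) auto
  moreover have "lincomb smult e (\<lambda>i. ?a i * l) = (\<Sum>i\<in>supp ?a. smult (e i) (?a i * l))"
    by (rule lincomb_eq_sum[OF S]) auto
  moreover have "\<dots> = smult x l"
    using sum_coords[OF e S subset_refl] by (simp add: smult_mult flip: smult_sum_left)
  ultimately show ?thesis using coords_lincomb[OF e] by metis
qed

lemma coords_basis_vector:
  assumes e: "is_basis smult e"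
  shows "coords smult e (e i) = (\<lambda>j. if j = i then 1 else 0)"
proof -
  have "finsupp (\<lambda>j. if j = i then (1::'k) else 0)"
    unfolding finsupp_def by (rule finite_subset[of _ "{i}"]) auto
  moreover have "lincomb smult e (\<lambda>j. if j = i then 1 else 0) = e i"
    by (subst lincomb_eq_sum[of "{i}"]) auto
  ultimately show ?thesis using coords_lincomb[OF e] by metis
qed

end

locale sesq_space = admissible \<sigma> \<epsilon> + right_vs smult
  for \<sigma> :: "'k::division_ring \<Rightarrow> 'k" and \<epsilon> :: 'k and smult :: "'v::ab_group_add \<Rightarrow> 'k \<Rightarrow> 'v" +
  fixes f :: "'v \<Rightarrow> 'v \<Rightarrow> 'k"
  assumes sesq: "trace_valued_sesq \<sigma> \<epsilon> smult f"
begin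

lemma f_add_left: "f (x + y) z = f x z + f y z"
  using sesq unfolding trace_valued_sesq_def by blast

lemma f_add_right: "f x (y + z) = f x y + f x z"
  using sesq unfolding trace_valued_sesq_def by blast

lemma f_smult: "f (smult x l) (smult y m) = \<sigma> l * f x y * m"
  using sesq unfolding trace_valued_sesq_def by blast

lemma f_swap: "f y x = \<sigma> (f x y) * \<epsilon>"
  using sesq unfolding trace_valued_sesq_def by blast

lemma f_zero_left [simp]: "f 0 y = 0"
  using f_add_left[of 0 0 y] by simp

lemma f_zero_right [simp]: "f x 0 = 0"
  using f_add_right[of x 0 0] by simp

lemma f_sum_left: "f (sum g A) y = (\<Sum>i\<in>A. f (g i) y)"
  by (induction A rule: infinite_finite_induct) (auto simp: f_add_left)

lemma f_sum_right: "f x (sum g A) = (\<Sum>i\<in>A. f x (g i))"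
  by (induction A rule: infinite_finite_induct) (auto simp: f_add_right)

definition triangular_sum :: "('i::linorder \<Rightarrow> 'v) \<Rightarrow> ('i \<Rightarrow> 'k) \<Rightarrow> ('i \<Rightarrow> 'k) \<Rightarrow> 'i set \<Rightarrow> 'k" where
  "triangular_sum e a b S = (\<Sum>i\<in>S. \<Sum>j\<in>S. if i < j then \<sigma> (a i) * f (e i) (e j) * b j else 0)"

lemma gE_eq_triangular_sum:
  assumes S: "finite S" "supp (coords smult e x) \<subseteq> S" "supp (coords smult e y) \<subseteq> S"
  shows "gE \<sigma> smult f e x y = triangular_sum e (coords smult e x) (coords smult e y) S"
proof -
  define a b where "a = coords smult e x" and "b = coords smult e y"
  let ?t = "\<lambda>i j. \<sigma> (a i) * f (e i) (e j) * b j"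
  have "gE \<sigma> smult f e x y = (\<Sum>(i, j)\<in>{(i, j). a i \<noteq> 0 \<and> b j \<noteq> 0 \<and> i < j}. ?t i j)"
    unfolding gE_def Let_def a_def b_def ..
  also have "\<dots> = (\<Sum>(i, j)\<in>S \<times> S. if i < j then ?t i j else 0)"
  proof (rule sum.mono_neutral_cong_left)
    show "\<forall>p\<in>S \<times> S - {(i, j). a i \<noteq> 0 \<and> b j \<noteq> 0 \<and> i < j}.
        (case p of (i, j) \<Rightarrow> if i < j then ?t i j else 0) = 0"
      by (auto split: if_splits)
  qed (use S in \<open>auto simp: a_def b_def\<close>)
  also have "\<dots> = triangular_sum e a b S"
    unfolding triangular_sum_def sum.cartesian_product by simp
  finally show ?thesis unfolding a_def b_def .
qed

lemma gE_eq_triangular_sum_diag: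
  assumes "is_basis smult e"
  shows "gE \<sigma> smult f e x x = triangular_sum e (coords smult e x) (coords smult e x) (supp (coords smult e x))"
  using assms by (intro gE_eq_triangular_sum finite_supp_coords) auto

lemma gE_add_sigma_gE_swap:
  assumes e: "is_basis smult e" and diag: "\<And>i. f (e i) (e i) = 0"
  shows "gE \<sigma> smult f e x y + \<sigma> (gE \<sigma> smult f e y x) * \<epsilon> = f x y"
proof -
  define a c where "a = coords smult e x" and "c = coords smult e y"
  define S where "S = supp a \<union> supp c"
  have S: "finite S" unfolding S_def a_def c_def using finite_supp_coords[OF e] by blast
  let ?t = "\<lambda>i j. \<sigma> (a i) * f (e i) (e j) * c j"
  have "\<sigma> (triangular_sum e c a S) * \<epsilon>
      = (\<Sum>i\<in>S. \<Sum>j\<in>S. if i < j then ?t j i else 0)"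
    unfolding triangular_sum_def sigma_sum sum_distrib_right
    by (intro sum.cong refl) (simp add: sigma_sandwich_mult_eps f_swap[symmetric])
  also have "\<dots> = (\<Sum>i\<in>S. \<Sum>j\<in>S. if j < i then ?t i j else 0)"
    by (rule sum.swap)
  finally have "triangular_sum e a c S + \<sigma> (triangular_sum e c a S) * \<epsilon>
      = (\<Sum>i\<in>S. \<Sum>j\<in>S. (if i < j then ?t i j else 0) + (if j < i then ?t i j else 0))"
    unfolding triangular_sum_def by (simp add: sum.distrib)
  also have "\<dots> = (\<Sum>i\<in>S. \<Sum>j\<in>S. ?t i j)"
    using diag by (intro sum.cong refl) (auto simp: neq_iff)
  also have "\<dots> = f (\<Sum>i\<in>S. smult (e i) (a i)) (\<Sum>j\<in>S. smult (e j) (c j))"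
    by (simp only: f_sum_left f_sum_right f_smult) (rule sum.swap)
  also have "\<dots> = f x y"
    using sum_coords[OF e S] unfolding a_def c_def S_def by auto
  finally show ?thesis
    using gE_eq_triangular_sum[OF S] unfolding S_def a_def c_def by auto
qed

lemma gE_smult_diag:
  assumes e: "is_basis smult e"
  shows "gE \<sigma> smult f e (smult x l) (smult x l) = \<sigma> l * gE \<sigma> smult f e x x * l"
proof -
  define a where "a = coords smult e x"
  have S: "finite (supp a)" unfolding a_def using finite_supp_coords[OF e] .
  have "gE \<sigma> smult f e (smult x l) (smult x l) = triangular_sum e (\<lambda>i. a i * l) (\<lambda>i. a i * l) (supp a)"
    unfolding a_def coords_smult[OF e, symmetric]
    by (rule gE_eq_triangular_sum) (auto simp: coords_smult[OF e] finite_supp_coords[OF e])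
  also have "\<dots> = \<sigma> l * triangular_sum e a a (supp a) * l"
    unfolding triangular_sum_def sum_distrib_left sum_distrib_right
    by (intro sum.cong refl) (simp add: sigma_mult mult.assoc)
  finally show ?thesis using gE_eq_triangular_sum_diag[OF e] unfolding a_def by simp
qed

lemma gE_add_diag:
  assumes e: "is_basis smult e"
  shows "gE \<sigma> smult f e (x + y) (x + y)
    = gE \<sigma> smult f e x x + gE \<sigma> smult f e x y + gE \<sigma> smult f e y x + gE \<sigma> smult f e y y"
proof -
  define a c where "a = coords smult e x" and "c = coords smult e y"
  define S where "S = supp a \<union> supp c"
  have S: "finite S" unfolding S_def a_def c_def using finite_supp_coords[OF e] by blast
  have xy: "coords smult e (x + y) = (\<lambda>i. a i + c i)"
    unfolding a_def c_def by (rule coords_add[OF e])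
  have "triangular_sum e (\<lambda>i. a i + c i) (\<lambda>i. a i + c i) S
      = triangular_sum e a a S + triangular_sum e a c S + triangular_sum e c a S + triangular_sum e c c S"
    unfolding triangular_sum_def sum.distrib[symmetric]
    by (intro sum.cong refl) (simp add: sigma_add algebra_simps)
  moreover have "gE \<sigma> smult f e (x + y) (x + y) = triangular_sum e (\<lambda>i. a i + c i) (\<lambda>i. a i + c i) S"
    unfolding xy[symmetric] by (rule gE_eq_triangular_sum[OF S]) (auto simp: xy S_def)
  moreover have "gE \<sigma> smult f e u v = triangular_sum e (coords smult e u) (coords smult e v) S"
    if "u \<in> {x, y}" "v \<in> {x, y}" for u v
    using that by (intro gE_eq_triangular_sum[OF S]) (auto simp: S_def a_def c_def)
  ultimately show ?thesis unfolding a_def c_def by simp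
qed

lemma gE_basis_vector_diag:
  assumes e: "is_basis smult e"
  shows "gE \<sigma> smult f e (e i) (e i) = 0"
  using gE_eq_triangular_sum[of "{i}" e "e i" "e i"]
  by (simp add: coords_basis_vector[OF e] triangular_sum_def)

end

locale gen_quadratic_space = sesq_space \<sigma> \<epsilon> smult f
  for \<sigma> :: "'k::division_ring \<Rightarrow> 'k" and \<epsilon> smult and f :: "'v::ab_group_add \<Rightarrow> 'v \<Rightarrow> 'k" +
  fixes R :: "'k set" and q :: "'v \<Rightarrow> 'k"
  assumes gqf: "gen_quad_form \<sigma> \<epsilon> smult R q f"
begin

lemma closed_subgroup_R: "closed_subgroup \<sigma> \<epsilon> R"
  using gqf unfolding gen_quad_form_def by blast

lemma q_smult_mod_R: "q (smult x l) - circ \<sigma> (q x) l \<in> R"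
  using gqf unfolding gen_quad_form_def by blast

lemma q_add_mod_R: "q (x + y) - (q x + q y + f x y) \<in> R"
  using gqf unfolding gen_quad_form_def by blast

lemma eq_zero_if_right_multiples_in_R:
  assumes "nontrivial_gqf R q" and "\<And>m. u * m \<in> R"
  shows "u = 0"
proof (rule ccontr)
  assume "u \<noteq> 0"
  then have "t \<in> R" for t using assms(2)[of "inverse u * t"] by (simp flip: mult.assoc)
  then show False using assms(1) unfolding nontrivial_gqf_def by blast
qed

text \<open>For r \<in> R, both r m + m^\<sigma> r (a difference of \<circ>-images) and m^\<sigma> r - (m^\<sigma> r)^\<sigma> \<epsilon> lie in R,
  so every right multiple of r + r^\<sigma> \<epsilon> does.\<close>
lemma R_subset_Ksym:
  assumes nt: "nontrivial_gqf R q" and r: "r \<in> R"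
  shows "r \<in> Ksym \<sigma> \<epsilon>"
proof -
  have "(r + \<sigma> r * \<epsilon>) * m \<in> R" for m
  proof -
    have "circ \<sigma> r (1 + m) - circ \<sigma> r 1 - circ \<sigma> r m = r * m + \<sigma> m * r"
      unfolding circ_def by (simp add: sigma_add algebra_simps)
    moreover have "circ \<sigma> r (1 + m) - circ \<sigma> r 1 - circ \<sigma> r m \<in> R"
      using closed_subgroup_R r by (intro closed_subgroup_diff closed_subgroup_circ)
    ultimately have "r * m + \<sigma> m * r \<in> R" by simp
    moreover have "\<sigma> m * r - \<sigma> (\<sigma> m * r) * \<epsilon> \<in> R"
      by (rule Kse_subset_closed_subgroup[OF closed_subgroup_R Kse_member])
    ultimately have "(r * m + \<sigma> m * r) - (\<sigma> m * r - \<sigma> (\<sigma> m * r) * \<epsilon>) \<in> R"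
      by (rule closed_subgroup_diff[OF closed_subgroup_R])
    moreover have "\<sigma> (\<sigma> m * r) * \<epsilon> = \<sigma> r * \<epsilon> * m"
      using sigma_sandwich_mult_eps[of m r 1] by (simp add: mult.assoc)
    ultimately show ?thesis by (simp add: algebra_simps)
  qed
  then have "r + \<sigma> r * \<epsilon> = 0" by (rule eq_zero_if_right_multiples_in_R[OF nt])
  then show ?thesis unfolding Ksym_def by (simp add: eq_neg_iff_add_eq_0)
qed

lemma q_smult_in_R:
  assumes "q x \<in> R"
  shows "q (smult x l) \<in> R"
proof -
  have "(q (smult x l) - circ \<sigma> (q x) l) + circ \<sigma> (q x) l \<in> R"
    using closed_subgroup_R q_smult_mod_R closed_subgroup_circ[OF closed_subgroup_R assms]
    by (rule closed_subgroup_add)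
  then show ?thesis by simp
qed

lemma q_zero_in_R: "q 0 \<in> R"
  using q_smult_mod_R[of 0 0] by (simp add: circ_def)

text \<open>f(x,x) m = f(x, x m) is the defect of q on x + x m, all of whose q-values lie in R.\<close>
lemma f_diag_zero_if_singular:
  assumes nt: "nontrivial_gqf R q" and x: "q x \<in> R"
  shows "f x x = 0"
proof (rule eq_zero_if_right_multiples_in_R[OF nt])
  fix m
  let ?y = "smult x m"
  have "f x ?y = q (x + ?y) - (q x + q ?y) - (q (x + ?y) - (q x + q ?y + f x ?y))"
    by (simp add: algebra_simps)
  also have "\<dots> \<in> R"
  proof (rule closed_subgroup_diff[OF closed_subgroup_R _ q_add_mod_R])
    show "q (x + ?y) - (q x + q ?y) \<in> R"
      using q_smult_in_R[OF x, of "1 + m"] closed_subgroup_add[OF closed_subgroup_R x q_smult_in_R[OF x]]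
      by (simp add: smult_add_right closed_subgroup_diff[OF closed_subgroup_R])
  qed
  finally show "f x x * m \<in> R" using f_smult[of x 1 x m] by simp
qed

lemma triangular_sum_insert_max:
  assumes "finite A" and "\<forall>i\<in>A. i < m"
  shows "triangular_sum e a a (insert m A)
    = triangular_sum e a a A + (\<Sum>i\<in>A. \<sigma> (a i) * f (e i) (e m) * a m)"
proof -
  have "m \<notin> A" using assms(2) by auto
  moreover have "(\<Sum>j\<in>insert m A. if m < j then \<sigma> (a m) * f (e m) (e j) * a j else 0) = 0"
    using assms(2) by (intro sum.neutral) auto
  ultimately show ?thesis
    using assms unfolding triangular_sum_def by (simp add: sum.distrib)
qed

text \<open>Adding the largest index m last, the defect f(y, e_m a_m) of q is exactly the new column
  of the triangular sum.\<close>
lemma q_sum_mod_R: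
  assumes sing: "\<And>i. q (e i) \<in> R" and S: "finite S"
  shows "q (\<Sum>i\<in>S. smult (e i) (a i)) - triangular_sum e a a S \<in> R"
  using S
proof (induction S rule: finite_linorder_max_induct)
  case empty
  then show ?case using q_zero_in_R by (simp add: triangular_sum_def)
next
  case (insert m A)
  define y z where "y = (\<Sum>i\<in>A. smult (e i) (a i))" and "z = smult (e m) (a m)"
  have "m \<notin> A" using insert by auto
  then have yz: "(\<Sum>i\<in>insert m A. smult (e i) (a i)) = y + z"
    using insert by (simp add: y_def z_def add.commute)
  have "f y z = (\<Sum>i\<in>A. \<sigma> (a i) * f (e i) (e m) * a m)"
    unfolding y_def z_def by (simp add: f_sum_left f_smult)
  then have "q (y + z) - triangular_sum e a a (insert m A)
      = (q (y + z) - (q y + q z + f y z)) + (q y - triangular_sum e a a A) + q z"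
    using triangular_sum_insert_max[OF insert(1,2)] by (simp add: algebra_simps)
  also have "\<dots> \<in> R"
    using closed_subgroup_R q_add_mod_R insert.IH q_smult_in_R[OF sing]
    by (intro closed_subgroup_add) (auto simp: y_def z_def)
  finally show ?case unfolding yz .
qed

lemma q_minus_gE_in_R:
  assumes sing: "\<And>i. q (e i) \<in> R" and e: "is_basis smult e"
  shows "q x - gE \<sigma> smult f e x x \<in> R"
  using q_sum_mod_R[of e "supp (coords smult e x)" "coords smult e x", OF sing finite_supp_coords[OF e]]
    sum_coords[OF e finite_supp_coords[OF e] subset_refl]
  by (simp add: gE_eq_triangular_sum_diag[OF e])

lemma gE_diag_in_R_iff_singular:
  assumes sing: "\<And>i. q (e i) \<in> R" and e: "is_basis smult e"
  shows "gE \<sigma> smult f e x x \<in> R \<longleftrightarrow> q x \<in> R"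
proof
  assume "gE \<sigma> smult f e x x \<in> R"
  from closed_subgroup_add[OF closed_subgroup_R q_minus_gE_in_R[OF sing e, of x] this]
  show "q x \<in> R" by simp
next
  assume "q x \<in> R"
  from closed_subgroup_diff[OF closed_subgroup_R this q_minus_gE_in_R[OF sing e, of x]]
  show "gE \<sigma> smult f e x x \<in> R" by simp
qed

lemma rsubspace_REE:
  assumes nt: "nontrivial_gqf R q"
    and sing: "\<And>i. q (e i) \<in> R" "\<And>i. q (e' i) \<in> R" and e': "is_basis smult e'"
  shows "rsubspace \<sigma> \<epsilon> R (REE \<sigma> \<epsilon> smult f e e')"
proof -
  have "REE \<sigma> \<epsilon> smult f e e' \<subseteq> R"
    unfolding REE_def using gE_diag_in_R_iff_singular[OF sing(2) e'] sing(1)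
    by (intro closed_hull_minimal[OF closed_subgroup_R]) auto
  then show ?thesis
    unfolding rsubspace_def REE_def using closed_subgroup_closed_hull R_subset_Ksym[OF nt] by blast
qed

end

locale two_bases = sesq_space \<sigma> \<epsilon> smult f
  for \<sigma> :: "'k::division_ring \<Rightarrow> 'k" and \<epsilon> smult and f :: "'v::ab_group_add \<Rightarrow> 'v \<Rightarrow> 'k" +
  fixes e e' :: "'i::linorder \<Rightarrow> 'v"
  assumes basis: "is_basis smult e" and basis': "is_basis smult e'"
    and diag: "\<And>i. f (e i) (e i) = 0" and diag': "\<And>i. f (e' i) (e' i) = 0"
begin

abbreviation delta :: "'v \<Rightarrow> 'k" where
  "delta \<equiv> deltaEE \<sigma> smult f e e'"

abbreviation R_EE :: "'k set" where
  "R_EE \<equiv> REE \<sigma> \<epsilon> smult f e e'"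

lemma delta_add_mod_Kse: "delta (x + y) - (delta x + delta y) \<in> Kse \<sigma> \<epsilon>"
proof -
  let ?u = "gE \<sigma> smult f e y x" and ?v = "gE \<sigma> smult f e' y x"
  have "gE \<sigma> smult f e x y = f x y - \<sigma> ?u * \<epsilon>" "gE \<sigma> smult f e' x y = f x y - \<sigma> ?v * \<epsilon>"
    using gE_add_sigma_gE_swap[OF basis diag] gE_add_sigma_gE_swap[OF basis' diag']
    by (simp_all add: eq_diff_eq)
  then have "delta (x + y) - (delta x + delta y) = (?u - \<sigma> ?u * \<epsilon>) - (?v - \<sigma> ?v * \<epsilon>)"
    unfolding deltaEE_def gE_add_diag[OF basis] gE_add_diag[OF basis'] by (simp add: algebra_simps)
  also have "\<dots> \<in> Kse \<sigma> \<epsilon>"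
    by (rule closed_subgroup_diff[OF closed_subgroup_Kse Kse_member Kse_member])
  finally show ?thesis .
qed

lemma delta_smult: "delta (smult x l) = circ \<sigma> (delta x) l"
  unfolding deltaEE_def gE_smult_diag[OF basis] gE_smult_diag[OF basis'] circ_def
  by (simp add: algebra_simps)

lemma delta_zero: "delta 0 = 0"
  using delta_smult[of 0 0] by (simp add: circ_def)

lemma delta_basis_vector: "delta (e i) = - gE \<sigma> smult f e' (e i) (e i)"
  unfolding deltaEE_def gE_basis_vector_diag[OF basis] by simp

lemma delta_sum_mod_Kse:
  assumes "finite S"
  shows "delta (\<Sum>i\<in>S. smult (e i) (c i))
    + (\<Sum>i\<in>S. circ \<sigma> (gE \<sigma> smult f e' (e i) (e i)) (c i)) \<in> Kse \<sigma> \<epsilon>"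
  using assms
proof (induction S rule: finite_induct)
  case empty
  then show ?case using delta_zero closed_subgroup_zero[OF closed_subgroup_Kse] by simp
next
  case (insert i A)
  let ?z = "smult (e i) (c i)" and ?y = "\<Sum>i\<in>A. smult (e i) (c i)"
  let ?g = "\<lambda>i. circ \<sigma> (gE \<sigma> smult f e' (e i) (e i)) (c i)"
  have "delta ?z = - ?g i"
    unfolding delta_smult delta_basis_vector circ_uminus ..
  then have "delta (?z + ?y) + (?g i + sum ?g A)
      = (delta (?z + ?y) - (delta ?z + delta ?y)) + (delta ?y + sum ?g A)"
    by (simp add: algebra_simps)
  also have "\<dots> \<in> Kse \<sigma> \<epsilon>"
    by (rule closed_subgroup_add[OF closed_subgroup_Kse delta_add_mod_Kse insert.IH])
  finally show ?case using insert.hyps by simp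
qed

lemma gE_basis_vector_in_R_EE: "gE \<sigma> smult f e' (e i) (e i) \<in> R_EE"
  unfolding REE_def by (rule subsetD[OF closed_hull_superset]) (rule rangeI)

lemma delta_in_R_EE: "delta x \<in> R_EE"
proof -
  let ?c = "coords smult e x"
  let ?g = "\<lambda>i. circ \<sigma> (gE \<sigma> smult f e' (e i) (e i)) (?c i)"
  have S: "finite (supp ?c)" by (rule finite_supp_coords[OF basis])
  have cs: "closed_subgroup \<sigma> \<epsilon> R_EE" unfolding REE_def by (rule closed_subgroup_closed_hull)
  have "delta x + sum ?g (supp ?c) \<in> R_EE"
    using delta_sum_mod_Kse[OF S, of ?c] sum_coords[OF basis S subset_refl]
    by (simp add: Kse_subset_closed_subgroup[OF cs])
  moreover have "sum ?g (supp ?c) \<in> R_EE"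
    using cs gE_basis_vector_in_R_EE by (intro closed_subgroup_sum closed_subgroup_circ)
  ultimately show ?thesis using closed_subgroup_diff[OF cs] by fastforce
qed

lemma R_EE_subset_delta_image: "R_EE \<subseteq> {t. \<exists>x. delta x - t \<in> Kse \<sigma> \<epsilon>}"
  unfolding REE_def
proof (rule closed_hull_minimal)
  show "closed_subgroup \<sigma> \<epsilon> {t. \<exists>x. delta x - t \<in> Kse \<sigma> \<epsilon>}"
    using delta_add_mod_Kse delta_smult closed_subgroup_zero[OF closed_subgroup_Kse]
    by (intro closed_subgroup_image_mod_Kse[where act = smult]) simp_all
  have "delta (- e i) - gE \<sigma> smult f e' (e i) (e i) \<in> Kse \<sigma> \<epsilon>" for i
    using closed_subgroup_uminus[OF closed_subgroup_Kse delta_add_mod_Kse[of "- e i" "e i"]]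
    by (simp add: delta_zero delta_basis_vector algebra_simps)
  then show "range (\<lambda>i. gE \<sigma> smult f e' (e i) (e i)) \<subseteq> {t. \<exists>x. delta x - t \<in> Kse \<sigma> \<epsilon>}"
    by blast
qed

text \<open>g_{E}(e'_i,e'_i) = \<delta>_{E,E'}(e'_i) because g_{E'}(e'_i,e'_i) = 0.\<close>
lemma REE_swap_subset_R_EE: "REE \<sigma> \<epsilon> smult f e' e \<subseteq> R_EE"
  unfolding REE_def[of _ _ _ _ e' e]
proof (rule closed_hull_minimal)
  show "closed_subgroup \<sigma> \<epsilon> R_EE" unfolding REE_def by (rule closed_subgroup_closed_hull)
  show "range (\<lambda>i. gE \<sigma> smult f e (e' i) (e' i)) \<subseteq> R_EE"
    using delta_in_R_EE[of "e' _"] by (auto simp: deltaEE_def gE_basis_vector_diag[OF basis'])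
qed

end

theorem mainTheorem11:
  fixes \<sigma> :: "'k::division_ring \<Rightarrow> 'k" and \<epsilon> :: 'k
    and smult :: "'v::ab_group_add \<Rightarrow> 'k \<Rightarrow> 'v"
    and R :: "'k set" and q :: "'v \<Rightarrow> 'k" and f :: "'v \<Rightarrow> 'v \<Rightarrow> 'k"
    and e e' :: "'i::linorder \<Rightarrow> 'v"
  assumes "admissible_pair \<sigma> \<epsilon>"
    and "right_vector_space smult"
    and "gen_quad_form \<sigma> \<epsilon> smult R q f"
    and "nontrivial_gqf R q"
    and "is_basis smult e" and "is_basis smult e'"
    and "\<forall>i. q_singular R q (e i)" and "\<forall>i. q_singular R q (e' i)"
  shows "rsubspace \<sigma> \<epsilon> R (REE \<sigma> \<epsilon> smult f e e')
    \<and> (\<forall>x y. deltaEE \<sigma> smult f e e' (x + y)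
              - (deltaEE \<sigma> smult f e e' x + deltaEE \<sigma> smult f e e' y) \<in> Kse \<sigma> \<epsilon>)
    \<and> (\<forall>x l. deltaEE \<sigma> smult f e e' (smult x l)
              - circ \<sigma> (deltaEE \<sigma> smult f e e' x) l \<in> Kse \<sigma> \<epsilon>)
    \<and> (\<forall>x. deltaEE \<sigma> smult f e e' x \<in> REE \<sigma> \<epsilon> smult f e e')
    \<and> (\<forall>t\<in>REE \<sigma> \<epsilon> smult f e e'. \<exists>x. deltaEE \<sigma> smult f e e' x - t \<in> Kse \<sigma> \<epsilon>)
    \<and> (\<forall>c. finsupp c \<longrightarrow>
          deltaEE \<sigma> smult f e e' (lincomb smult e c)
          - (- (\<Sum>i\<in>{i. c i \<noteq> 0}. circ \<sigma> (gE \<sigma> smult f e' (e i) (e i)) (c i))) \<in> Kse \<sigma> \<epsilon>)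
    \<and> (\<forall>x. deltaEE \<sigma> smult f e' e x = - deltaEE \<sigma> smult f e e' x)
    \<and> REE \<sigma> \<epsilon> smult f e e' = REE \<sigma> \<epsilon> smult f e' e"
proof -
  interpret gen_quadratic_space \<sigma> \<epsilon> smult f R q
    using assms(1-3) by unfold_locales (auto simp: gen_quad_form_def)
  have sing: "q (e i) \<in> R" "q (e' i) \<in> R" for i
    using assms(7,8) unfolding q_singular_def by blast+
  interpret two_bases \<sigma> \<epsilon> smult f e e'
    using assms(4-6) sing f_diag_zero_if_singular by unfold_locales auto
  interpret swapped: two_bases \<sigma> \<epsilon> smult f e' e
    using assms(4-6) sing f_diag_zero_if_singular by unfold_locales auto
  have "delta (lincomb smult e c) + (\<Sum>i\<in>supp c. circ \<sigma> (gE \<sigma> smult f e' (e i) (e i)) (c i))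
      \<in> Kse \<sigma> \<epsilon>" if "finsupp c" for c
    using delta_sum_mod_Kse that unfolding finsupp_def lincomb_def by blast
  then show ?thesis
    using rsubspace_REE[OF assms(4) sing assms(6)] delta_add_mod_Kse delta_smult delta_in_R_EE R_EE_subset_delta_image
      REE_swap_subset_R_EE swapped.REE_swap_subset_R_EE closed_subgroup_zero[OF closed_subgroup_Kse]
    by (auto simp: deltaEE_def)
qed

end
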